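(* Consider a fully connected gossip network with a source and $n$ end-nodes as described in the context, and let $\rho=\lambda_e/\lambda$. Let $F^{(n)}=\lim_{t\to\infty}\mathbb{E}[F_1(t)]$ denote the average binary freshness of a single end-node. Then, as $n\to\infty$, $F^{(n)}$ decreases to $0$ as $n^{-\rho}$ when $0<\rho<1$; as $\frac{\log n}{n}$ when $\rho=1$; and as $n^{-1}$ when $\rho>1$ (in each case, $F^{(n)}$ is bounded above and below by positive constant multiples of the stated function for all sufficiently large $n$).
   Context: Model: The information at the source is updated (a new version is generated) according to a Poisson process of rate $\lambda_e>0$. The source sends its current version to each end-node $j\in\{1,\dots,n\}$ according to a Poisson process of rate $\lambda/n$, where $\lambda>0$. The end-nodes are fully connected: each end-node $i$ sends its stored version to each other end-node $j\ne i$ according to a Poisson process of rate $\lambda/(n-1)$. All processes are independent. A node receiving a version keeps the fresher of its stored and received versions. The binary freshness $F_j(t)$ of node $j$ is $1$ if node $j$ stores the current source version at time $t$ and $0$ otherwise; thus it becomes $0$ whenever the source generates a new version, becomes $1$ when the source updates node $j$, and becomes $\max(F_i,F_j)$ when node $i$ updates node $j$. *)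

theory Defs
  imports "HOL-Analysis.Analysis"
begin

text \<open>
  The end-nodes are indexed by 0,...,n-1 (node 0 plays the role of node 1 of the paper).
  A state is the set S \<subseteq> {..<n} of end-nodes that currently store the current source
  version (i.e. the nodes j with F_j = 1).  Every independent Poisson process of the model
  is an event with a rate and a deterministic effect on the state.
\<close>

definition gossip_events :: "real \<Rightarrow> real \<Rightarrow> nat \<Rightarrow> (real \<times> (nat set \<Rightarrow> nat set)) list" where
  "gossip_events lam_e lam n =
     [(lam_e, (\<lambda>S. {}))]
     @ map (\<lambda>j. (lam / real n, (\<lambda>S. insert j S))) [0..<n]
     @ concat (map (\<lambda>i. map (\<lambda>j. (lam / real (n - 1),
                                    (\<lambda>S. if i \<in> S then insert j S else S)))
                              (filter (\<lambda>j. j \<noteq> i) [0..<n])) [0..<n])"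

definition gossip_generator :: "real \<Rightarrow> real \<Rightarrow> nat \<Rightarrow> nat set \<Rightarrow> nat set \<Rightarrow> real" where
  "gossip_generator lam_e lam n S T =
     (\<Sum>e\<leftarrow>gossip_events lam_e lam n.
        fst e * ((if snd e S = T then 1 else 0) - (if S = T then 1 else 0)))"

fun state_mat_pow :: "nat \<Rightarrow> (nat set \<Rightarrow> nat set \<Rightarrow> real) \<Rightarrow> nat \<Rightarrow> nat set \<Rightarrow> nat set \<Rightarrow> real" where
  "state_mat_pow n Q 0 S T = (if S = T then 1 else 0)"
| "state_mat_pow n Q (Suc k) S T = (\<Sum>U\<in>Pow {..<n}. state_mat_pow n Q k S U * Q U T)"

definition gossip_transition :: "real \<Rightarrow> real \<Rightarrow> nat \<Rightarrow> real \<Rightarrow> nat set \<Rightarrow> nat set \<Rightarrow> real" where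
  "gossip_transition lam_e lam n t S T =
     (\<Sum>k. t ^ k / fact k * state_mat_pow n (gossip_generator lam_e lam n) k S T)"

definition expected_freshness :: "real \<Rightarrow> real \<Rightarrow> nat \<Rightarrow> nat set \<Rightarrow> real \<Rightarrow> real" where
  "expected_freshness lam_e lam n S0 t =
     (\<Sum>T\<in>Pow {..<n}. gossip_transition lam_e lam n t S0 T * (if 0 \<in> T then 1 else 0))"

end

theory Submission
  imports Defs "HOL-Real_Asymp.Real_Asymp"
begin

(*
  Let x_A(t) be the probability that some end-node of the set A holds the current version, and
  k = card A, r = lam_e / lam. Applying the generator of the chain to the indicator of "T meets A"
  gives the linear equation
    x_A' = lam * (k / n + k / (n - 1) * (sum over i not in A of x_(A + i)) - total_rate r n k * x_A),
  whose coefficients only depend on k. By downward induction on k, every x_A converges to a limit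
  v_k that only depends on k, with v_k = s_k + q_k * v_(k+1) for the ratios
    s_k = (k / n) / total_rate r n k,   q_k = (k * (n - k) / (n - 1)) / total_rate r n k;
  unrolling, F(n) = v_1 = sum_(m = 1..n) s_m * prod_(j = 1..m-1) q_j.
  Elementary estimates give 1 / (n * (r + 2)) <= s_m <= 1 / (n - m + 1), the lower bound
  exp (- (3 * r + 2)) * m powr (- r) for prod_(j < m) q_j when 2 * (m - 1) <= n, and the upper
  bound m powr (- a) * ((n - m + 1) / n) powr c, with a = r for r <= 1 and some a > 1 otherwise;
  the second factor tames the pole of the bound on s_m at m = n. Hence F(n) lies between multiples
  of (1 / n) * sum_(m <= n / 2) m powr (- r) and of (1 / n) * sum_(m <= n) m powr (- a) + n powr (- a),
  both of order n powr (- r), ln n / n or 1 / n according to r < 1, r = 1 or r > 1.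
*)

section \<open>Linear differential equations of first order\<close>

lemma linear_ode_upper_bound:
  fixes f g :: "real \<Rightarrow> real"
  assumes "0 < a" and f': "\<And>t. (f has_real_derivative - a * f t + g t) (at t)"
    and g: "\<And>t. T \<le> t \<Longrightarrow> g t \<le> M" and "T \<le> t"
  shows "f t \<le> M / a + exp (- a * (t - T)) * (f T - M / a)"
proof -
  define y where "y u = exp (a * u) * (f u - M / a)" for u
  have y': "(y has_real_derivative exp (a * u) * (g u - M)) (at u)" for u
    unfolding y_def using \<open>0 < a\<close> by (auto intro!: derivative_eq_intros f' simp: field_simps)
  have "y t \<le> y T"
    by (rule deriv_nonpos_imp_antimono[OF y']) (use g \<open>T \<le> t\<close> in \<open>auto simp: mult_nonneg_nonpos\<close>)
  then have "f t - M / a \<le> exp (a * T) / exp (a * t) * (f T - M / a)"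
    by (simp add: y_def field_simps)
  also have "exp (a * T) / exp (a * t) = exp (- a * (t - T))"
    by (simp add: exp_diff[symmetric] algebra_simps)
  finally show ?thesis by simp
qed

lemma linear_ode_eventually_less:
  fixes f g :: "real \<Rightarrow> real"
  assumes a: "0 < a" and f': "\<And>t. (f has_real_derivative - a * f t + g t) (at t)"
    and g: "(g \<longlongrightarrow> L) at_top" and "L / a < y"
  shows "eventually (\<lambda>t. f t < y) at_top"
proof -
  define \<eta> where "\<eta> = (y - L / a) / 2"
  have "0 < \<eta>" using \<open>L / a < y\<close> by (simp add: \<eta>_def)
  define M where "M = L + a * \<eta>"
  have "M / a + \<eta> = y" using a by (simp add: M_def \<eta>_def field_simps)
  have "L < M" using a \<open>0 < \<eta>\<close> by (simp add: M_def)
  then obtain T where T: "\<And>t. T \<le> t \<Longrightarrow> g t < M"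
    using order_tendstoD(2)[OF g] by (auto simp: eventually_at_top_linorder)
  have "((\<lambda>t. exp (- a * (t - T)) * (f T - M / a)) \<longlongrightarrow> 0) at_top"
    using a by real_asymp
  then have "eventually (\<lambda>t. exp (- a * (t - T)) * (f T - M / a) < \<eta>) at_top"
    using \<open>0 < \<eta>\<close> by (rule order_tendstoD)
  with eventually_ge_at_top[of T] show ?thesis
  proof eventually_elim
    case (elim t)
    have "f t \<le> M / a + exp (- a * (t - T)) * (f T - M / a)"
      by (rule linear_ode_upper_bound[OF a f']) (use T elim in \<open>auto intro: less_imp_le\<close>)
    with elim \<open>M / a + \<eta> = y\<close> show "f t < y" by linarith
  qed
qed

lemma linear_ode_tendsto:
  fixes f g :: "real \<Rightarrow> real"
  assumes a: "0 < a" and f': "\<And>t. (f has_real_derivative - a * f t + g t) (at t)"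
    and g: "(g \<longlongrightarrow> L) at_top"
  shows "(f \<longlongrightarrow> L / a) at_top"
proof (rule order_tendstoI)
  fix y assume "L / a < y"
  then show "eventually (\<lambda>t. f t < y) at_top"
    by (rule linear_ode_eventually_less[OF a f' g])
next
  fix y assume "y < L / a"
  have "((\<lambda>t. - f t) has_real_derivative - a * (- f t) + (- g t)) (at t)" for t
    using f' by (auto intro!: derivative_eq_intros)
  moreover have "((\<lambda>t. - g t) \<longlongrightarrow> - L) at_top" using g by (rule tendsto_minus)
  moreover have "- L / a < - y" using \<open>y < L / a\<close> by simp
  ultimately have "eventually (\<lambda>t. - f t < - y) at_top"
    by (rule linear_ode_eventually_less[OF a])
  then show "eventually (\<lambda>t. y < f t) at_top" by simp
qed

section \<open>Exponentials of matrices indexed by the subsets of {..<n}\<close>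

definition state_mat_exp :: "nat \<Rightarrow> (nat set \<Rightarrow> nat set \<Rightarrow> real) \<Rightarrow> real \<Rightarrow> nat set \<Rightarrow> nat set \<Rightarrow> real" where
  "state_mat_exp n Q t S T = (\<Sum>k. state_mat_pow n Q k S T / fact k * t ^ k)"

lemma abs_state_mat_pow_le:
  assumes Q: "\<And>U T. \<bar>Q U T\<bar> \<le> q"
  shows "\<bar>state_mat_pow n Q k S T\<bar> \<le> (2 ^ n * q) ^ k"
proof (induction k arbitrary: T)
  case (Suc k)
  have "0 \<le> q" using order_trans[OF abs_ge_zero Q] .
  have "\<bar>state_mat_pow n Q (Suc k) S T\<bar> \<le> (\<Sum>U\<in>Pow {..<n}. \<bar>state_mat_pow n Q k S U\<bar> * \<bar>Q U T\<bar>)"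
    by (simp add: abs_mult[symmetric])
  also have "\<dots> \<le> (\<Sum>U\<in>Pow {..<n}. (2 ^ n * q) ^ k * q)"
    using \<open>0 \<le> q\<close> by (intro sum_mono mult_mono Suc Q) auto
  also have "\<dots> = (2 ^ n * q) ^ Suc k" by (simp add: card_Pow)
  finally show ?case .
qed simp

lemma summable_state_mat_exp:
  assumes "\<And>U T. \<bar>Q U T\<bar> \<le> q"
  shows "summable (\<lambda>k. state_mat_pow n Q k S T / fact k * t ^ k)"
proof (rule summable_comparison_test'[OF summable_exp[of "2 ^ n * q * \<bar>t\<bar>"]])
  fix k
  have "norm (state_mat_pow n Q k S T / fact k * t ^ k) \<le> (2 ^ n * q) ^ k / fact k * \<bar>t\<bar> ^ k"
    using abs_state_mat_pow_le[OF assms]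
    by (auto simp: abs_mult power_abs intro!: mult_right_mono divide_right_mono)
  then show "norm (state_mat_pow n Q k S T / fact k * t ^ k) \<le> inverse (fact k) * (2 ^ n * q * \<bar>t\<bar>) ^ k"
    by (simp add: field_simps)
qed

lemma state_mat_exp_0: "state_mat_exp n Q 0 S T = (if S = T then 1 else 0)"
  unfolding state_mat_exp_def by (subst suminf_finite[of "{0}"]) auto

lemma has_real_derivative_state_mat_exp:
  assumes Q: "\<And>U T. \<bar>Q U T\<bar> \<le> q"
  shows "((\<lambda>t. state_mat_exp n Q t S T) has_real_derivative
           (\<Sum>U\<in>Pow {..<n}. state_mat_exp n Q t S U * Q U T)) (at t)"
proof -
  let ?c = "\<lambda>U k. state_mat_pow n Q k S U / fact k"
  have "((\<lambda>t. \<Sum>k. ?c T k * t ^ k) has_real_derivative (\<Sum>k. diffs (?c T) k * t ^ k)) (at t)"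
    by (rule termdiffs_strong_converges_everywhere) (rule summable_state_mat_exp[OF Q])
  also have "(\<Sum>k. diffs (?c T) k * t ^ k) = (\<Sum>k. \<Sum>U\<in>Pow {..<n}. ?c U k * t ^ k * Q U T)"
    by (intro suminf_cong)
       (simp add: diffs_def sum_distrib_left sum_distrib_right sum_divide_distrib field_simps
             del: of_nat_Suc)
  also have "\<dots> = (\<Sum>U\<in>Pow {..<n}. \<Sum>k. ?c U k * t ^ k * Q U T)"
    by (intro suminf_sum summable_mult2 summable_state_mat_exp[OF Q])
  also have "\<dots> = (\<Sum>U\<in>Pow {..<n}. state_mat_exp n Q t S U * Q U T)"
    unfolding state_mat_exp_def by (simp only: suminf_mult2[OF summable_state_mat_exp[OF Q]])
  finally show ?thesis by (simp only: state_mat_exp_def)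
qed

lemma has_real_derivative_state_mat_exp_sum:
  assumes "\<And>U T. \<bar>Q U T\<bar> \<le> q"
  shows "((\<lambda>t. \<Sum>T\<in>Pow {..<n}. state_mat_exp n Q t S T * h T) has_real_derivative
           (\<Sum>U\<in>Pow {..<n}. state_mat_exp n Q t S U * (\<Sum>T\<in>Pow {..<n}. Q U T * h T))) (at t)"
proof -
  have "((\<lambda>t. \<Sum>T\<in>Pow {..<n}. state_mat_exp n Q t S T * h T) has_real_derivative
          (\<Sum>T\<in>Pow {..<n}. (\<Sum>U\<in>Pow {..<n}. state_mat_exp n Q t S U * Q U T) * h T)) (at t)"
    by (intro DERIV_sum DERIV_cmult_right has_real_derivative_state_mat_exp[OF assms])
  also have "(\<Sum>T\<in>Pow {..<n}. (\<Sum>U\<in>Pow {..<n}. state_mat_exp n Q t S U * Q U T) * h T)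
      = (\<Sum>U\<in>Pow {..<n}. state_mat_exp n Q t S U * (\<Sum>T\<in>Pow {..<n}. Q U T * h T))"
    unfolding sum_distrib_left sum_distrib_right mult.assoc by (rule sum.swap)
  finally show ?thesis .
qed

lemma state_mat_exp_row_sum:
  assumes "\<And>U T. \<bar>Q U T\<bar> \<le> q" and "\<And>U. U \<subseteq> {..<n} \<Longrightarrow> (\<Sum>T\<in>Pow {..<n}. Q U T) = 0"
    and "S \<subseteq> {..<n}"
  shows "(\<Sum>T\<in>Pow {..<n}. state_mat_exp n Q t S T) = 1"
proof -
  have "((\<lambda>t. \<Sum>T\<in>Pow {..<n}. state_mat_exp n Q t S T) has_real_derivative 0) (at t)" for t
  proof -
    have "((\<lambda>t. \<Sum>T\<in>Pow {..<n}. state_mat_exp n Q t S T * 1) has_real_derivative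
            (\<Sum>U\<in>Pow {..<n}. state_mat_exp n Q t S U * (\<Sum>T\<in>Pow {..<n}. Q U T * 1))) (at t)"
      by (rule has_real_derivative_state_mat_exp_sum[OF assms(1)])
    also have "(\<Sum>U\<in>Pow {..<n}. state_mat_exp n Q t S U * (\<Sum>T\<in>Pow {..<n}. Q U T * 1)) = 0"
      using assms(2) by (intro sum.neutral) simp
    finally show ?thesis by simp
  qed
  then have "(\<Sum>T\<in>Pow {..<n}. state_mat_exp n Q t S T) = (\<Sum>T\<in>Pow {..<n}. state_mat_exp n Q 0 S T)"
    using DERIV_isconst_all[of "\<lambda>t. \<Sum>T\<in>Pow {..<n}. state_mat_exp n Q t S T"] by blast
  also have "\<dots> = 1" using assms(3) by (simp add: state_mat_exp_0)
  finally show ?thesis .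
qed

section \<open>The generator of the gossip network\<close>

lemma event_generator_apply:
  fixes es :: "(real \<times> ('s \<Rightarrow> 's)) list"
  assumes "finite P" "U \<in> P" "\<And>e. e \<in> set es \<Longrightarrow> snd e U \<in> P"
  shows "(\<Sum>T\<in>P. (\<Sum>e\<leftarrow>es. fst e * ((if snd e U = T then 1 else 0) - (if U = T then 1 else 0))) * h T)
       = (\<Sum>e\<leftarrow>es. fst e * (h (snd e U) - h U))"
  using assms(3)
proof (induction es)
  case (Cons e es)
  have delta: "(\<Sum>T\<in>P. (if V = T then 1 else 0) * h T) = h V" if "V \<in> P" for V
    using assms(1) that by (simp add: if_distrib[of "\<lambda>x. x * _"] cong: if_cong)
  have "(\<Sum>T\<in>P. fst e * ((if snd e U = T then 1 else 0) - (if U = T then 1 else 0)) * h T)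
      = fst e * (h (snd e U) - h U)"
    using assms(2) Cons.prems
    by (simp only: mult.assoc left_diff_distrib right_diff_distrib sum_subtractf
          sum_distrib_left[symmetric] delta list.set_intros(1))
  moreover have "(\<Sum>T\<in>P. (\<Sum>e\<leftarrow>es. fst e * ((if snd e U = T then 1 else 0) - (if U = T then 1 else 0))) * h T)
       = (\<Sum>e\<leftarrow>es. fst e * (h (snd e U) - h U))"
    using Cons by simp
  ultimately show ?case by (simp only: list.map sum_list.Cons distrib_right sum.distrib)
qed simp

lemma gossip_events_closed:
  assumes "e \<in> set (gossip_events lam_e lam n)" and "U \<subseteq> {..<n}"
  shows "snd e U \<subseteq> {..<n}"
  using assms unfolding gossip_events_def by (auto split: if_splits)

lemma gossip_generator_apply:
  assumes "U \<subseteq> {..<n}"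
  shows "(\<Sum>T\<in>Pow {..<n}. gossip_generator lam_e lam n U T * h T)
       = lam_e * (h {} - h U) + (\<Sum>j<n. lam / real n * (h (insert j U) - h U))
         + (\<Sum>i<n. \<Sum>j\<in>{..<n} - {i}. lam / real (n - 1) * (h (if i \<in> U then insert j U else U) - h U))"
    (is "_ = ?rhs")
proof -
  have sum_upt_ne: "sum_list (map f (filter (\<lambda>j. j \<noteq> i) [0..<n])) = (\<Sum>j\<in>{..<n} - {i}. f j)"
    for f :: "nat \<Rightarrow> real" and i
    by (subst sum_list_distinct_conv_sum_set) (auto intro: sum.cong)
  have sum_list_concat: "sum_list (concat xss) = sum_list (map sum_list xss)" for xss :: "real list list"
    by (induction xss) auto
  have sum_upt: "sum_list (map f [0..<n]) = (\<Sum>j<n. f j)" for f :: "nat \<Rightarrow> real"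
    by (simp add: sum_list_distinct_conv_sum_set lessThan_atLeast0)
  have "(\<Sum>T\<in>Pow {..<n}. gossip_generator lam_e lam n U T * h T)
      = (\<Sum>e\<leftarrow>gossip_events lam_e lam n. fst e * (h (snd e U) - h U))"
    unfolding gossip_generator_def
    by (rule event_generator_apply) (use assms gossip_events_closed in auto)
  also have "\<dots> = ?rhs"
    unfolding gossip_events_def
    by (simp only: map_append sum_list_append map_concat sum_list_concat map_map o_def
          sum_upt sum_upt_ne list.map sum_list.Cons sum_list.Nil prod.sel add_0_right)
  finally show ?thesis .
qed

lemma abs_gossip_generator_le:
  "\<bar>gossip_generator lam_e lam n U T\<bar> \<le> (\<Sum>e\<leftarrow>gossip_events lam_e lam n. \<bar>fst e\<bar>)"
proof -
  have "\<bar>gossip_generator lam_e lam n U T\<bar> \<le> (\<Sum>e\<leftarrow>gossip_events lam_e lam n.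
          \<bar>fst e * ((if snd e U = T then 1 else 0) - (if U = T then 1 else 0))\<bar>)"
    unfolding gossip_generator_def by (rule order_trans[OF sum_list_abs]) (simp add: o_def)
  also have "\<dots> \<le> (\<Sum>e\<leftarrow>gossip_events lam_e lam n. \<bar>fst e\<bar>)"
    by (rule sum_list_mono) (auto simp: abs_mult)
  finally show ?thesis .
qed

lemma gossip_generator_row_sum:
  assumes "U \<subseteq> {..<n}"
  shows "(\<Sum>T\<in>Pow {..<n}. gossip_generator lam_e lam n U T) = 0"
  using gossip_generator_apply[OF assms, where h = "\<lambda>_. 1"] by simp

lemma sum_of_bool_mem_mult:
  fixes c :: "'a :: comm_semiring_1"
  assumes "finite X" "A \<subseteq> X"
  shows "(\<Sum>j\<in>X. of_bool (j \<in> A) * c) = of_nat (card A) * c"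
proof -
  have "X \<inter> {j. j \<in> A} = A" using assms(2) by auto
  then show ?thesis using assms(1) by simp
qed

lemma sum_source_updates_meets:
  fixes A U :: "nat set" and c :: real
  defines "m B \<equiv> of_bool (B \<inter> U \<noteq> {}) :: real"
  assumes "A \<subseteq> {..<n}"
  shows "(\<Sum>j<n. c * (of_bool (A \<inter> insert j U \<noteq> {}) - m A)) = c * card A * (1 - m A)"
proof -
  have "(\<Sum>j<n. c * (of_bool (A \<inter> insert j U \<noteq> {}) - m A)) = (\<Sum>j<n. of_bool (j \<in> A) * (c * (1 - m A)))"
    by (intro sum.cong) (auto simp: m_def)
  also have "\<dots> = c * card A * (1 - m A)"
    using assms(2) by (subst sum_of_bool_mem_mult) auto
  finally show ?thesis .
qed

lemma sum_gossip_updates_meets: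
  fixes A U :: "nat set" and c :: real
  defines "m B \<equiv> of_bool (B \<inter> U \<noteq> {}) :: real"
  assumes A: "A \<subseteq> {..<n}"
  shows "(\<Sum>i<n. \<Sum>j\<in>{..<n} - {i}. c * (of_bool (A \<inter> (if i \<in> U then insert j U else U) \<noteq> {}) - m A))
       = c * card A * (\<Sum>i\<in>{..<n} - A. m (insert i A) - m A)"
proof -
  have inner: "(\<Sum>j\<in>{..<n} - {i}. c * (of_bool (A \<inter> (if i \<in> U then insert j U else U) \<noteq> {}) - m A))
      = of_bool (i \<notin> A) * (c * card A * (m (insert i A) - m A))" for i
  proof (cases "i \<in> A")
    case True
    then have "of_bool (A \<inter> (if i \<in> U then insert j U else U) \<noteq> {}) = m A" for j
      by (auto simp: m_def)
    with True show ?thesis by simp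
  next
    case False
    have "(\<Sum>j\<in>{..<n} - {i}. c * (of_bool (A \<inter> (if i \<in> U then insert j U else U) \<noteq> {}) - m A))
        = (\<Sum>j\<in>{..<n} - {i}. of_bool (j \<in> A) * (c * (m (insert i A) - m A)))"
      by (intro sum.cong) (auto simp: m_def)
    also have "\<dots> = card A * (c * (m (insert i A) - m A))"
      using A False by (intro sum_of_bool_mem_mult) auto
    finally show ?thesis using False by simp
  qed
  have "(\<Sum>i<n. \<Sum>j\<in>{..<n} - {i}. c * (of_bool (A \<inter> (if i \<in> U then insert j U else U) \<noteq> {}) - m A))
      = (\<Sum>i<n. of_bool (i \<notin> A) * (c * card A * (m (insert i A) - m A)))"
    by (simp only: inner)
  also have "\<dots> = c * card A * (\<Sum>i\<in>{..<n} - A. m (insert i A) - m A)"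
    by (simp only: sum_of_bool_mult_eq[OF finite_lessThan] sum_distrib_left Diff_eq Collect_neg_eq
          Collect_mem_eq)
  finally show ?thesis .
qed

lemma gossip_generator_apply_meets:
  fixes A U :: "nat set"
  defines "m B \<equiv> of_bool (B \<inter> U \<noteq> {}) :: real"
  assumes A: "A \<subseteq> {..<n}" and U: "U \<subseteq> {..<n}"
  shows "(\<Sum>T\<in>Pow {..<n}. gossip_generator lam_e lam n U T * of_bool (A \<inter> T \<noteq> {}))
       = - lam_e * m A + lam / real n * card A * (1 - m A)
         + lam / real (n - 1) * card A * (\<Sum>i\<in>{..<n} - A. m (insert i A) - m A)"
  unfolding gossip_generator_apply[OF U] m_def sum_source_updates_meets[OF A]
    sum_gossip_updates_meets[OF A]
  by simp

section \<open>Convergence of the freshness probabilities\<close>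

definition total_rate :: "real \<Rightarrow> nat \<Rightarrow> nat \<Rightarrow> real" where
  "total_rate r n k = r + real k / real n + real k * (real n - real k) / (real n - 1)"

definition source_share :: "real \<Rightarrow> nat \<Rightarrow> nat \<Rightarrow> real" where
  "source_share r n k = real k / real n / total_rate r n k"

definition gossip_share :: "real \<Rightarrow> nat \<Rightarrow> nat \<Rightarrow> real" where
  "gossip_share r n k = real k * (real n - real k) / (real n - 1) / total_rate r n k"

definition freshness_limit :: "real \<Rightarrow> nat \<Rightarrow> nat \<Rightarrow> real" where
  "freshness_limit r n k = (\<Sum>m=k..n. source_share r n m * (\<Prod>j=k..<m. gossip_share r n j))"

lemma total_rate_pos: "0 < r \<Longrightarrow> k \<le> n \<Longrightarrow> 0 < total_rate r n k"
  unfolding total_rate_def by (cases k) (auto intro!: add_pos_nonneg)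

lemma freshness_limit_rec:
  assumes "k \<le> n"
  shows "freshness_limit r n k = source_share r n k + gossip_share r n k * freshness_limit r n (Suc k)"
proof -
  have "(\<Sum>m=Suc k..n. source_share r n m * (\<Prod>j=k..<m. gossip_share r n j))
      = gossip_share r n k * freshness_limit r n (Suc k)"
    unfolding freshness_limit_def sum_distrib_left
    by (intro sum.cong) (simp_all add: prod.atLeast_Suc_lessThan)
  then show ?thesis
    using assms by (simp add: freshness_limit_def sum.atLeast_Suc_atMost)
qed

lemma gossip_transition_eq_state_mat_exp:
  "gossip_transition lam_e lam n t S T = state_mat_exp n (gossip_generator lam_e lam n) t S T"
  unfolding gossip_transition_def state_mat_exp_def by (simp add: field_simps)

locale gossip_network =
  fixes lam_e lam :: real and n :: nat
  assumes lam_e_pos: "0 < lam_e" and lam_pos: "0 < lam" and two_le_n: "2 \<le> n"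
begin

definition fresh_prob :: "nat set \<Rightarrow> nat set \<Rightarrow> real \<Rightarrow> real" where
  "fresh_prob S0 A t = (\<Sum>T\<in>Pow {..<n}. gossip_transition lam_e lam n t S0 T * of_bool (A \<inter> T \<noteq> {}))"

lemma fresh_prob_drift:
  assumes S0: "S0 \<subseteq> {..<n}" and A: "A \<subseteq> {..<n}"
  shows "(\<Sum>U\<in>Pow {..<n}. gossip_transition lam_e lam n t S0 U
            * (\<Sum>T\<in>Pow {..<n}. gossip_generator lam_e lam n U T * of_bool (A \<inter> T \<noteq> {})))
       = - lam_e * fresh_prob S0 A t + lam / real n * card A * (1 - fresh_prob S0 A t)
         + lam / real (n - 1) * card A * (\<Sum>i\<in>{..<n} - A. fresh_prob S0 (insert i A) t - fresh_prob S0 A t)"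
    (is "_ = ?a * ?x A + ?b * (1 - ?x A) + ?c * _")
proof -
  let ?P = "\<lambda>U. gossip_transition lam_e lam n t S0 U"
  let ?m = "\<lambda>B U. of_bool (B \<inter> U \<noteq> {}) :: real"
  let ?g = "\<lambda>U. \<Sum>i\<in>{..<n} - A. ?m (insert i A) U - ?m A U"
  have total: "(\<Sum>U\<in>Pow {..<n}. ?P U) = 1"
    unfolding gossip_transition_eq_state_mat_exp
    by (rule state_mat_exp_row_sum[OF abs_gossip_generator_le gossip_generator_row_sum S0])
  have swap: "(\<Sum>U\<in>Pow {..<n}. ?P U * ?g U) = (\<Sum>i\<in>{..<n} - A. ?x (insert i A) - ?x A)"
  proof -
    have "(\<Sum>U\<in>Pow {..<n}. ?P U * ?g U)
        = (\<Sum>i\<in>{..<n} - A. \<Sum>U\<in>Pow {..<n}. ?P U * (?m (insert i A) U - ?m A U))"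
      unfolding sum_distrib_left by (rule sum.swap)
    then show ?thesis by (simp only: fresh_prob_def right_diff_distrib sum_subtractf)
  qed
  have "(\<Sum>U\<in>Pow {..<n}. ?P U * (\<Sum>T\<in>Pow {..<n}. gossip_generator lam_e lam n U T * ?m A T))
      = (\<Sum>U\<in>Pow {..<n}. ?a * (?P U * ?m A U) + ?b * (?P U - ?P U * ?m A U) + ?c * (?P U * ?g U))"
    by (intro sum.cong refl) (subst gossip_generator_apply_meets[OF A]; auto simp: algebra_simps)
  also have "\<dots> = ?a * ?x A + ?b * ((\<Sum>U\<in>Pow {..<n}. ?P U) - ?x A) + ?c * (\<Sum>U\<in>Pow {..<n}. ?P U * ?g U)"
    unfolding fresh_prob_def by (simp only: sum.distrib sum_subtractf sum_distrib_left[symmetric])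
  finally show ?thesis unfolding total swap .
qed

lemma has_real_derivative_fresh_prob:
  assumes S0: "S0 \<subseteq> {..<n}" and A: "A \<subseteq> {..<n}"
  shows "(fresh_prob S0 A has_real_derivative
           - (lam * total_rate (lam_e / lam) n (card A)) * fresh_prob S0 A t
           + lam * (real (card A) / real n + real (card A) / (real n - 1)
                    * (\<Sum>i\<in>{..<n} - A. fresh_prob S0 (insert i A) t))) (at t)"
proof -
  let ?x = "\<lambda>B. fresh_prob S0 B t"
  let ?k = "real (card A)"
  have deriv: "(fresh_prob S0 A has_real_derivative
          (\<Sum>U\<in>Pow {..<n}. gossip_transition lam_e lam n t S0 U
            * (\<Sum>T\<in>Pow {..<n}. gossip_generator lam_e lam n U T * of_bool (A \<inter> T \<noteq> {})))) (at t)"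
    unfolding fresh_prob_def[abs_def] gossip_transition_eq_state_mat_exp
    by (rule has_real_derivative_state_mat_exp_sum[OF abs_gossip_generator_le])
  have "(\<Sum>U\<in>Pow {..<n}. gossip_transition lam_e lam n t S0 U
          * (\<Sum>T\<in>Pow {..<n}. gossip_generator lam_e lam n U T * of_bool (A \<inter> T \<noteq> {})))
      = - lam_e * ?x A + lam / real n * ?k * (1 - ?x A)
        + lam / real (n - 1) * ?k * (\<Sum>i\<in>{..<n} - A. ?x (insert i A) - ?x A)"
    by (rule fresh_prob_drift[OF S0 A])
  also have "\<dots> = - (lam * total_rate (lam_e / lam) n (card A)) * ?x A
      + lam * (?k / real n + ?k / (real n - 1) * (\<Sum>i\<in>{..<n} - A. ?x (insert i A)))"
  proof -
    have "card A \<le> n" using A by (metis card_lessThan card_mono finite_lessThan)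
    then have "real (card ({..<n} - A)) = real n - ?k"
      using A by (simp add: card_Diff_subset finite_subset)
    then have sum_eq: "(\<Sum>i\<in>{..<n} - A. ?x (insert i A) - ?x A)
        = (\<Sum>i\<in>{..<n} - A. ?x (insert i A)) - (real n - ?k) * ?x A"
      by (simp add: sum_subtractf)
    have "real (n - 1) = real n - 1" using two_le_n by simp
    then show ?thesis
      unfolding sum_eq total_rate_def using lam_pos
      by (simp add: algebra_simps add_divide_distrib diff_divide_distrib)
  qed
  finally show ?thesis using deriv by (simp only:)
qed

lemma tendsto_fresh_prob:
  assumes S0: "S0 \<subseteq> {..<n}" and A: "A \<subseteq> {..<n}"
  shows "(fresh_prob S0 A \<longlongrightarrow> freshness_limit (lam_e / lam) n (card A)) at_top"
  using A
proof (induction "n - card A" arbitrary: A rule: less_induct)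
  case less
  let ?r = "lam_e / lam"
  let ?k = "card A"
  have "finite A" using less.prems finite_subset by blast
  have k_le: "?k \<le> n" using less.prems by (metis card_lessThan card_mono finite_lessThan)
  have "(fresh_prob S0 (insert i A) \<longlongrightarrow> freshness_limit ?r n (Suc ?k)) at_top"
    if "i \<in> {..<n} - A" for i
  proof -
    have "card (insert i A) = Suc ?k" using that \<open>finite A\<close> by simp
    moreover have "card (insert i A) \<le> n"
      using that less.prems card_mono[OF finite_lessThan, of "insert i A" n] by auto
    ultimately have "n - card (insert i A) < n - ?k" by simp
    with \<open>card (insert i A) = Suc ?k\<close> show ?thesis using less.hyps that less.prems by fastforce
  qed
  then have g_lim: "((\<lambda>t. lam * (real ?k / real n + real ?k / (real n - 1)
                    * (\<Sum>i\<in>{..<n} - A. fresh_prob S0 (insert i A) t)))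
      \<longlongrightarrow> lam * (real ?k / real n + real ?k / (real n - 1)
                    * (\<Sum>i\<in>{..<n} - A. freshness_limit ?r n (Suc ?k)))) at_top"
    by (intro tendsto_intros) auto
  have rate_pos: "0 < lam * total_rate ?r n ?k"
    using lam_pos lam_e_pos k_le by (simp add: total_rate_pos)
  have "(fresh_prob S0 A \<longlongrightarrow> lam * (real ?k / real n + real ?k / (real n - 1)
        * (\<Sum>i\<in>{..<n} - A. freshness_limit ?r n (Suc ?k))) / (lam * total_rate ?r n ?k)) at_top"
    by (rule linear_ode_tendsto[OF rate_pos has_real_derivative_fresh_prob[OF S0 less.prems] g_lim])
  also have "lam * (real ?k / real n + real ?k / (real n - 1)
      * (\<Sum>i\<in>{..<n} - A. freshness_limit ?r n (Suc ?k))) / (lam * total_rate ?r n ?k)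
      = freshness_limit ?r n ?k"
  proof -
    have "card ({..<n} - A) = n - ?k" using less.prems by (simp add: card_Diff_subset \<open>finite A\<close>)
    then show ?thesis
      using lam_pos two_le_n k_le
      by (simp add: freshness_limit_rec[OF k_le] source_share_def gossip_share_def
            add_divide_distrib)
  qed
  finally show ?case .
qed

end

section \<open>Estimates for the limiting freshness\<close>

lemma one_plus_powr_le:
  fixes b x :: real
  assumes "0 \<le> b" "b \<le> 1" "- 1 \<le> x"
  shows "(1 + x) powr b \<le> 1 + b * x"
proof (cases "x = - 1")
  case False
  then have "0 < 1 + x" using assms(3) by simp
  with Youngs_inequality_0[of b "1 - b" "1 + x" 1] assms(1,2) show ?thesis
    by (simp add: algebra_simps)
qed (use assms in simp)

lemma one_plus_powr_le_convex:
  fixes a x :: real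
  assumes "1 \<le> a" "a \<le> 2" "0 \<le> x" "x \<le> 1"
  shows "(1 + x) powr a \<le> 1 + (2 * a - 1) * x"
proof -
  have "(1 + x) powr a = (1 + x) * (1 + x) powr (a - 1)"
    using powr_add[of "1 + x" 1 "a - 1"] assms(3) by simp
  also have "\<dots> \<le> (1 + x) * (1 + (a - 1) * x)"
    using assms by (intro mult_left_mono one_plus_powr_le) auto
  also have "\<dots> = 1 + (2 * a - 1) * x - (a - 1) * x * (1 - x)"
    by (simp add: algebra_simps)
  also have "\<dots> \<le> 1 + (2 * a - 1) * x"
    using assms by simp
  finally show ?thesis .
qed

lemma powr_le_prod_one_plus:
  fixes a b :: real
  assumes bound: "\<And>x. 0 \<le> x \<Longrightarrow> x \<le> 1 \<Longrightarrow> (1 + x) powr a \<le> 1 + b * x"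
    and "1 \<le> m" "m \<le> M"
  shows "(real M / real m) powr a \<le> (\<Prod>i=m..<M. 1 + b / real i)"
  using assms(3)
proof (induction M rule: dec_induct)
  case (step M)
  have "0 < m" "0 < M" using assms(2) step(1) by simp_all
  then have "real (Suc M) / real m = real M / real m * (1 + 1 / real M)"
    by (simp add: field_simps)
  then have "(real (Suc M) / real m) powr a = (real M / real m) powr a * (1 + 1 / real M) powr a"
    by (simp only: powr_mult[symmetric] divide_nonneg_nonneg of_nat_0_le_iff)
  also have "\<dots> \<le> (\<Prod>i=m..<M. 1 + b / real i) * (1 + b / real M)"
    using step.IH bound[of "1 / real M"] \<open>0 < M\<close> by (intro mult_mono) (auto intro: order_trans[OF powr_ge_zero])
  also have "\<dots> = (\<Prod>i=m..<Suc M. 1 + b / real i)"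
    using step(1) by (simp add: prod.atLeastLessThan_Suc)
  finally show ?case .
qed (use assms(2) in simp)

lemma harm_le_one_plus_ln: "0 < n \<Longrightarrow> harm n \<le> 1 + ln (real n)"
  using euler_mascheroni_sequence_decreasing[of 1 n] by (simp add: harm_def)

lemma prod_one_plus_le_exp_powr:
  fixes r :: real
  assumes "0 \<le> r" "1 \<le> k"
  shows "(\<Prod>j=1..<k. 1 + r / real j) \<le> exp r * real k powr r"
proof -
  have "(\<Prod>j=1..<k. 1 + r / real j) \<le> (\<Prod>j=1..<k. exp (r / real j))"
    using assms(1) by (intro prod_mono) (auto intro: exp_ge_add_one_self)
  also have "\<dots> = exp (r * (\<Sum>j=1..<k. 1 / real j))"
    by (simp add: exp_sum sum_distrib_left)
  also have "(\<Sum>j=1..<k. 1 / real j) \<le> (\<Sum>j=1..k. 1 / real j)"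
    by (intro sum_mono2) auto
  also have "\<dots> = harm k" by (simp add: harm_def inverse_eq_divide)
  also have "harm k \<le> 1 + ln (real k)"
    using assms(2) by (intro harm_le_one_plus_ln) simp
  finally have "(\<Prod>j=1..<k. 1 + r / real j) \<le> exp (r * (1 + ln (real k)))"
    using assms(1) by (simp add: mult_left_mono)
  also have "\<dots> = exp r * real k powr r"
    using assms(2) by (simp add: powr_def exp_add algebra_simps)
  finally show ?thesis .
qed

lemma total_rate_le:
  assumes "0 < r" "1 \<le> k" "k \<le> n" "2 \<le> n"
  shows "total_rate r n k \<le> (r + 2) * real k"
proof -
  have "r \<le> r * real k" "real k / real n \<le> real k" using assms by (simp_all add: divide_le_eq)
  moreover have "real k * (real n - real k) / (real n - 1) \<le> real k"
    using assms by (simp add: divide_le_eq mult_left_mono)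
  ultimately show ?thesis unfolding total_rate_def by (simp add: algebra_simps)
qed

lemma source_share_le:
  assumes "0 < r" "1 \<le> k" "k \<le> n" "2 \<le> n"
  shows "source_share r n k \<le> 1 / (real n - real k + 1)"
proof -
  define T where "T = total_rate r n k"
  have "0 < T" using assms by (simp add: T_def total_rate_pos)
  have "real k / real n * (real n - real k + 1) = real k / real n + real k * (real n - real k) / real n"
    using assms by (simp add: field_simps)
  also have "\<dots> \<le> real k / real n + real k * (real n - real k) / (real n - 1)"
    using assms by (intro add_left_mono divide_left_mono) auto
  also have "\<dots> \<le> T" using assms by (simp add: T_def total_rate_def)
  finally show ?thesis
    using \<open>0 < T\<close> assms unfolding source_share_def T_def[symmetric] by (simp add: field_simps)
qed

lemma source_share_ge:
  assumes "0 < r" "1 \<le> k" "k \<le> n" "2 \<le> n"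
  shows "1 / (real n * (r + 2)) \<le> source_share r n k"
proof -
  have "0 < total_rate r n k" using assms by (simp add: total_rate_pos)
  then have "real k / real n / ((r + 2) * real k) \<le> source_share r n k"
    unfolding source_share_def using total_rate_le[OF assms] assms by (intro divide_left_mono) auto
  moreover have "real k / real n / ((r + 2) * real k) = 1 / (real n * (r + 2))"
    using assms by simp
  ultimately show ?thesis by simp
qed

lemma gossip_share_pos:
  assumes "0 < r" "1 \<le> j" "j < n"
  shows "0 < gossip_share r n j"
  using assms total_rate_pos[of r j n] unfolding gossip_share_def by simp

lemma gossip_term_mult_le_total_rate:
  fixes r c J N :: real
  assumes r: "0 < r" and c: "0 \<le> c" "c \<le> 1 / (2 * (1 + r))" and JN: "1 \<le> J" "J + 1 \<le> N"
  shows "J * (N - J) / (N - 1) * ((1 + r / J) * (1 + c / (N - J))) \<le> r + J / N + J * (N - J) / (N - 1)"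
proof -
  have "J \<noteq> 0" "N - J \<noteq> 0" "N - 1 \<noteq> 0" using JN by auto
  have "(1 + r / J) * (1 + c / (N - J)) = ((J + r) / J) * ((N - J + c) / (N - J))"
    using \<open>J \<noteq> 0\<close> \<open>N - J \<noteq> 0\<close> by (simp add: add_divide_distrib)
  then have "J * (N - J) / (N - 1) * ((1 + r / J) * (1 + c / (N - J))) = (J + r) * (N - J + c) / (N - 1)"
    using \<open>J \<noteq> 0\<close> \<open>N - J \<noteq> 0\<close> by simp
  also have "\<dots> = (J * (N - J) + r * (N - J) + c * (J + r)) / (N - 1)"
    by (simp add: algebra_simps)
  also have "\<dots> \<le> (J * (N - J) + r * (N - 1) + J * (N - 1) / N) / (N - 1)"
  proof -
    have "c * r \<le> J * (c * r)" using mult_right_mono[OF JN(1), of "c * r"] r c by simp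
    then have "c * (J + r) \<le> J * (c * (1 + r))" by (simp add: algebra_simps)
    also have "\<dots> \<le> J * (1 / 2)"
      using JN r c by (intro mult_left_mono) (auto simp: field_simps)
    also have "\<dots> \<le> J * (N - 1) / N" using JN by (simp add: field_simps)
    finally have "c * (J + r) \<le> J * (N - 1) / N" .
    moreover have "r * (N - J) \<le> r * (N - 1)" using r JN by simp
    ultimately show ?thesis using JN by (intro divide_right_mono) auto
  qed
  also have "\<dots> = r + J / N + J * (N - J) / (N - 1)"
    using \<open>N - 1 \<noteq> 0\<close> by (simp add: add_divide_distrib)
  finally show ?thesis .
qed

lemma total_rate_le_gossip_term_mult:
  fixes r J N :: real
  assumes r: "0 < r" and JN: "1 \<le> J" "2 * J \<le> N"
  shows "r + J / N + J * (N - J) / (N - 1) \<le> J * (N - J) / (N - 1) * ((1 + r / J) * (1 + (2 * r + 2) / N))"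
proof -
  have "J \<noteq> 0" "N \<noteq> 0" "0 < N - 1" using JN by auto
  have "N * (N - 1) * r + (N - 1) * J \<le> N * r * (N - J) + N * (J * r + J + r)"
    using JN r by (simp add: algebra_simps)
  also have "N * (J * r + J + r) \<le> N * ((J + r) * (r + 1))"
    using JN r by (intro mult_left_mono) (auto simp: algebra_simps)
  also have "\<dots> \<le> (2 * (N - J)) * ((J + r) * (r + 1))"
    using JN r by (intro mult_right_mono) auto
  also have "\<dots> = (N - J) * (J + r) * (2 * r + 2)"
    by (simp add: algebra_simps)
  finally have "N * (N - 1) * r + (N - 1) * J + N * (J * (N - J)) \<le> (N - J) * (J + r) * (N + 2 * r + 2)"
    by (simp add: algebra_simps)
  moreover have "(r + J / N + J * (N - J) / (N - 1)) * (N * (N - 1)) = N * (N - 1) * r + (N - 1) * J + N * (J * (N - J))"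
    using \<open>N \<noteq> 0\<close> \<open>0 < N - 1\<close> by (simp add: distrib_right)
  ultimately have "(r + J / N + J * (N - J) / (N - 1)) * (N * (N - 1))
      \<le> (N - J) * (J + r) * (N + 2 * r + 2)" by simp
  moreover have "(1 + r / J) * (1 + (2 * r + 2) / N) = ((J + r) / J) * ((N + 2 * r + 2) / N)"
    using \<open>J \<noteq> 0\<close> \<open>N \<noteq> 0\<close> by (simp add: add_divide_distrib)
  ultimately show ?thesis
    using \<open>J \<noteq> 0\<close> \<open>N \<noteq> 0\<close> \<open>0 < N - 1\<close> by (simp add: pos_le_divide_eq ac_simps)
qed

lemma gossip_share_le:
  assumes r: "0 < r" and c: "0 \<le> c" "c \<le> 1 / (2 * (1 + r))" and j: "1 \<le> j" "j < n"
  shows "gossip_share r n j \<le> 1 / ((1 + r / real j) * (1 + c / (real n - real j)))"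
proof -
  define B P where "B = real j * (real n - real j) / (real n - 1)"
    and "P = (1 + r / real j) * (1 + c / (real n - real j))"
  have "0 < P" using r c j by (simp add: P_def add_pos_nonneg)
  moreover have "0 < total_rate r n j" using r j by (simp add: total_rate_pos)
  moreover have "B * P \<le> total_rate r n j"
    unfolding B_def P_def total_rate_def using j by (intro gossip_term_mult_le_total_rate r c) auto
  ultimately show ?thesis
    unfolding gossip_share_def B_def[symmetric] P_def[symmetric] by (simp add: field_simps)
qed

lemma gossip_share_ge:
  assumes r: "0 < r" and j: "1 \<le> j" "2 * j \<le> n"
  shows "1 / ((1 + r / real j) * (1 + (2 * r + 2) / real n)) \<le> gossip_share r n j"
proof -
  define B P where "B = real j * (real n - real j) / (real n - 1)"
    and "P = (1 + r / real j) * (1 + (2 * r + 2) / real n)"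
  have "0 < P" using r j by (simp add: P_def add_pos_nonneg)
  moreover have "0 < total_rate r n j" using r j by (simp add: total_rate_pos)
  moreover have "total_rate r n j \<le> B * P"
    unfolding B_def P_def total_rate_def using j by (intro total_rate_le_gossip_term_mult r) auto
  ultimately show ?thesis
    unfolding gossip_share_def B_def[symmetric] P_def[symmetric] by (simp add: field_simps)
qed

lemma prod_gossip_share_le:
  assumes r: "0 < r" and c: "0 < c" "c \<le> 1 / (2 * (1 + r))"
    and bound: "\<And>x. 0 \<le> x \<Longrightarrow> x \<le> 1 \<Longrightarrow> (1 + x) powr a \<le> 1 + r * x"
    and k: "1 \<le> k" "k \<le> n"
  shows "(\<Prod>j=1..<k. gossip_share r n j) \<le> real k powr (- a) * ((real n - real k + 1) / real n) powr c"
proof -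
  define R C where "R = (\<Prod>j=1..<k. 1 + r / real j)" and "C = (\<Prod>j=1..<k. 1 + c / (real n - real j))"
  have "1 / (2 * (1 + r)) \<le> 1" using r by (simp add: field_simps)
  with c have "c \<le> 1" by linarith
  have R: "real k powr a \<le> R"
    using powr_le_prod_one_plus[OF bound order.refl k(1)] by (simp add: R_def)
  have "(real n / real (n + 1 - k)) powr c \<le> (\<Prod>i=n+1-k..<n. 1 + c / real i)"
    using k \<open>c \<le> 1\<close> c by (intro powr_le_prod_one_plus one_plus_powr_le) auto
  also have "(\<Prod>i=n+1-k..<n. 1 + c / real i) = C"
    unfolding C_def using k
    by (intro prod.reindex_bij_witness[where i = "\<lambda>j. n - j" and j = "\<lambda>i. n - i"]) auto
  finally have C: "(real n / (real n - real k + 1)) powr c \<le> C"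
    using k by (simp add: algebra_simps)
  have "(\<Prod>j=1..<k. gossip_share r n j) \<le> (\<Prod>j=1..<k. 1 / ((1 + r / real j) * (1 + c / (real n - real j))))"
    using k r c by (intro prod_mono conjI gossip_share_le less_imp_le[OF gossip_share_pos]) auto
  also have "\<dots> = 1 / (R * C)" by (simp add: R_def C_def prod_dividef prod.distrib)
  also have "\<dots> \<le> 1 / (real k powr a * (real n / (real n - real k + 1)) powr c)"
  proof -
    have "0 < real k powr a" "0 < (real n / (real n - real k + 1)) powr c" using k by auto
    with R C have "0 < R" "0 < C" by linarith+
    with R C \<open>0 < real k powr a\<close> \<open>0 < (real n / (real n - real k + 1)) powr c\<close> show ?thesis
      by (intro divide_left_mono mult_mono mult_pos_pos) (auto intro: less_imp_le)
  qed
  also have "\<dots> = real k powr (- a) * ((real n - real k + 1) / real n) powr c"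
    by (simp add: powr_minus_divide powr_divide)
  finally show ?thesis .
qed

lemma prod_gossip_share_ge:
  assumes r: "0 < r" and k: "1 \<le> k" "2 * (k - 1) \<le> n" and n: "1 \<le> n"
  shows "exp (- (3 * r + 2)) * real k powr (- r) \<le> (\<Prod>j=1..<k. gossip_share r n j)"
proof -
  define D where "D = 2 * r + 2"
  define R where "R = (\<Prod>j=1..<k. 1 + r / real j)"
  have "0 < R" unfolding R_def using r by (intro prod_pos) (auto intro: add_pos_nonneg)
  have "0 < D" using r by (simp add: D_def)
  then have "0 < (1 + D / real n) ^ (k - 1)" by (simp add: add_pos_nonneg)
  have R_le: "R \<le> exp r * real k powr r"
    unfolding R_def using r k by (intro prod_one_plus_le_exp_powr) auto
  have "(1 + D / real n) ^ (k - 1) \<le> (1 + D / real n) ^ n"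
    using k \<open>0 < D\<close> by (intro power_increasing) auto
  also have "\<dots> \<le> exp D" using n \<open>0 < D\<close> by (intro exp_ge_one_plus_x_over_n_power_n) auto
  finally have denom_le: "R * (1 + D / real n) ^ (k - 1) \<le> exp r * real k powr r * exp D"
    using R_le \<open>0 < R\<close> \<open>0 < D\<close> by (intro mult_mono) auto
  have "exp (- (3 * r + 2)) = 1 / (exp r * exp D)"
    by (simp only: exp_minus inverse_eq_divide D_def exp_add[symmetric]) (simp add: algebra_simps)
  then have "exp (- (3 * r + 2)) * real k powr (- r) = 1 / (exp r * real k powr r * exp D)"
    unfolding powr_minus_divide by (simp add: ac_simps)
  also have "\<dots> \<le> 1 / (R * (1 + D / real n) ^ (k - 1))"
    using denom_le \<open>0 < R\<close> \<open>0 < (1 + D / real n) ^ (k - 1)\<close> k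
    by (intro divide_left_mono mult_pos_pos) auto
  also have "\<dots> = (\<Prod>j=1..<k. 1 / ((1 + r / real j) * (1 + D / real n)))"
    by (simp add: R_def prod_dividef prod.distrib)
  also have "\<dots> \<le> (\<Prod>j=1..<k. gossip_share r n j)"
    using r k unfolding D_def
    by (intro prod_mono conjI gossip_share_ge) (auto simp: add_pos_nonneg less_imp_le)
  finally show ?thesis .
qed

lemma sum_powr_le:
  fixes b :: real
  assumes "0 < b" "b \<le> 1"
  shows "(\<Sum>i=1..n. real i powr (b - 1)) \<le> real n powr b / b"
proof (induction n)
  case (Suc n)
  let ?m = "real (Suc n)"
  have "real n = ?m * (1 + (- 1 / ?m))" by (simp add: field_simps)
  then have "real n powr b = ?m powr b * (1 + (- 1 / ?m)) powr b"
    by (simp only: powr_mult[symmetric])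
  also have "\<dots> \<le> ?m powr b * (1 + b * (- 1 / ?m))"
    using assms by (intro mult_left_mono one_plus_powr_le) auto
  also have "\<dots> = ?m powr b - b * ?m powr (b - 1)"
    by (simp add: powr_diff field_simps)
  finally have "?m powr (b - 1) \<le> (?m powr b - real n powr b) / b"
    using assms by (simp add: field_simps)
  with Suc.IH show ?case by (simp add: diff_divide_distrib)
qed simp

lemma freshness_term_le:
  fixes a c m N :: real
  assumes a: "0 < a" and c: "0 < c" "c \<le> 1" and N: "2 \<le> N" and m: "1 \<le> m" "m \<le> N"
  shows "1 / (N - m + 1) * (m powr (- a) * ((N - m + 1) / N) powr c)
       \<le> 2 / N * m powr (- a) + 2 powr a * N powr (- a - c) * (N - m + 1) powr (c - 1)"
proof (cases "2 * m \<le> N")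
  case True
  have "1 / (N - m + 1) \<le> 2 / N" using True m N by (simp add: field_simps)
  moreover have "((N - m + 1) / N) powr c \<le> 1" using m N c by (intro powr_le1) auto
  ultimately have "1 / (N - m + 1) * (m powr (- a) * ((N - m + 1) / N) powr c) \<le> 2 / N * (m powr (- a) * 1)"
    using m N by (intro mult_mono) auto
  moreover have "0 \<le> 2 powr a * N powr (- a - c) * (N - m + 1) powr (c - 1)" by simp
  ultimately show ?thesis by linarith
next
  case False
  have "m powr (- a) \<le> (N / 2) powr (- a)" using False a N by (intro powr_mono2') auto
  also have "(N / 2) powr (- a) = 2 powr a * N powr (- a)"
    by (simp add: powr_divide powr_minus_divide)
  finally have "1 / (N - m + 1) * (m powr (- a) * ((N - m + 1) / N) powr c)
      \<le> 1 / (N - m + 1) * (2 powr a * N powr (- a) * ((N - m + 1) / N) powr c)"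
    using m by (intro mult_left_mono mult_right_mono) auto
  also have "\<dots> = 2 powr a * N powr (- a - c) * (N - m + 1) powr (c - 1)"
    using m N by (simp add: powr_divide powr_diff powr_minus_divide powr_add field_simps)
  finally have "1 / (N - m + 1) * (m powr (- a) * ((N - m + 1) / N) powr c)
      \<le> 2 powr a * N powr (- a - c) * (N - m + 1) powr (c - 1)" .
  moreover have "0 \<le> 2 / N * m powr (- a)" using N by simp
  ultimately show ?thesis by linarith
qed

lemma freshness_limit_le:
  assumes r: "0 < r" and c: "0 < c" "c \<le> 1 / (2 * (1 + r))" and a: "0 < a"
    and bound: "\<And>x. 0 \<le> x \<Longrightarrow> x \<le> 1 \<Longrightarrow> (1 + x) powr a \<le> 1 + r * x"
    and n: "2 \<le> n"
  shows "freshness_limit r n 1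
           \<le> 2 / real n * (\<Sum>m=1..n. real m powr (- a)) + 2 powr a / c * real n powr (- a)"
proof -
  let ?N = "real n"
  have "1 / (2 * (1 + r)) \<le> 1" using r by (simp add: field_simps)
  with c have "c \<le> 1" by linarith
  have "freshness_limit r n 1
      \<le> (\<Sum>m=1..n. 2 / ?N * real m powr (- a) + 2 powr a * ?N powr (- a - c) * (?N - real m + 1) powr (c - 1))"
    unfolding freshness_limit_def
  proof (rule sum_mono)
    fix m assume m: "m \<in> {1..n}"
    have "source_share r n m * (\<Prod>j=1..<m. gossip_share r n j)
        \<le> 1 / (?N - real m + 1) * (real m powr (- a) * ((?N - real m + 1) / ?N) powr c)"
      using m n r c bound source_share_ge[of r m n] gossip_share_pos[of r _ n]
      by (intro mult_mono source_share_le prod_gossip_share_le prod_nonneg)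
         (auto intro: order_trans[OF _ source_share_ge] less_imp_le)
    also have "\<dots> \<le> 2 / ?N * real m powr (- a) + 2 powr a * ?N powr (- a - c) * (?N - real m + 1) powr (c - 1)"
      using m n a c \<open>c \<le> 1\<close> by (intro freshness_term_le) auto
    finally show "source_share r n m * (\<Prod>j=1..<m. gossip_share r n j) \<le> \<dots>" .
  qed
  also have "\<dots> = 2 / ?N * (\<Sum>m=1..n. real m powr (- a))
      + 2 powr a * ?N powr (- a - c) * (\<Sum>i=1..n. real i powr (c - 1))"
    by (subst (2) sum.atLeastAtMost_rev) (simp add: sum.distrib sum_distrib_left algebra_simps)
  also have "(\<Sum>i=1..n. real i powr (c - 1)) \<le> ?N powr c / c"
    using c \<open>c \<le> 1\<close> by (intro sum_powr_le) auto
  also have "2 powr a * ?N powr (- a - c) * (?N powr c / c) = 2 powr a / c * ?N powr (- a)"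
    using n by (simp add: powr_diff powr_minus_divide field_simps)
  finally show ?thesis by (simp add: mult_left_mono)
qed

lemma freshness_limit_ge:
  assumes r: "0 < r" and n: "2 \<le> n"
  shows "exp (- (3 * r + 2)) / (real n * (r + 2)) * (\<Sum>m=1..n div 2. real m powr (- r))
           \<le> freshness_limit r n 1"
proof -
  have term_nonneg: "0 \<le> source_share r n m * (\<Prod>j=1..<m. gossip_share r n j)" if "m \<in> {1..n}" for m
    using that r n source_share_ge[of r m n] gossip_share_pos[of r _ n]
    by (intro mult_nonneg_nonneg prod_nonneg) (auto intro: order_trans[OF _ source_share_ge] less_imp_le)
  have "exp (- (3 * r + 2)) / (real n * (r + 2)) * (\<Sum>m=1..n div 2. real m powr (- r))
      = (\<Sum>m=1..n div 2. 1 / (real n * (r + 2)) * (exp (- (3 * r + 2)) * real m powr (- r)))"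
    by (simp add: sum_distrib_left)
  also have "\<dots> \<le> (\<Sum>m=1..n div 2. source_share r n m * (\<Prod>j=1..<m. gossip_share r n j))"
    using r n
    by (intro sum_mono mult_mono source_share_ge prod_gossip_share_ge)
       (auto intro: order_trans[OF _ source_share_ge])
  also have "\<dots> \<le> freshness_limit r n 1"
    unfolding freshness_limit_def using term_nonneg by (intro sum_mono2) auto
  finally show ?thesis .
qed

lemma sum_powr_minus_one: "(\<Sum>m=1..n. real m powr (- 1)) = harm n"
  unfolding harm_def by (intro sum.cong) (auto simp: powr_minus)

section \<open>The three regimes\<close>

lemma freshness_limit_asymp_less_1:
  assumes r: "0 < r" "r < 1"
  shows "\<exists>c1 c2. c1 > 0 \<and> c2 > 0 \<and>
    (\<forall>\<^sub>F n in sequentially. c1 * real n powr (- r) \<le> freshness_limit r n 1 \<and>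
                              freshness_limit r n 1 \<le> c2 * real n powr (- r))"
proof (intro exI conjI)
  define c where "c = 1 / (2 * (1 + r))"
  have "0 < c" using r by (simp add: c_def)
  let ?c1 = "exp (- (3 * r + 2)) / (3 * (r + 2))"
  let ?c2 = "2 / (1 - r) + 2 powr r / c"
  show "0 < ?c1" using r by simp
  show "0 < ?c2" using r \<open>0 < c\<close> by (intro add_pos_pos divide_pos_pos) auto
  show "\<forall>\<^sub>F n in sequentially. ?c1 * real n powr (- r) \<le> freshness_limit r n 1 \<and>
                              freshness_limit r n 1 \<le> ?c2 * real n powr (- r)"
    unfolding eventually_sequentially
  proof (intro exI allI impI conjI)
    fix n :: nat assume n: "2 \<le> n"
    have "freshness_limit r n 1
        \<le> 2 / real n * (\<Sum>m=1..n. real m powr (- r)) + 2 powr r / c * real n powr (- r)"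
      using r n by (intro freshness_limit_le one_plus_powr_le) (auto simp: c_def)
    also have "\<dots> \<le> 2 / real n * (real n powr (1 - r) / (1 - r)) + 2 powr r / c * real n powr (- r)"
      using sum_powr_le[of "1 - r" n] r by (intro add_right_mono mult_left_mono) auto
    also have "\<dots> = ?c2 * real n powr (- r)"
      using n r \<open>0 < c\<close> by (simp add: powr_diff powr_minus_divide field_simps)
    finally show "freshness_limit r n 1 \<le> ?c2 * real n powr (- r)" .
    define M where "M = n div 2"
    have "n \<le> 3 * M" using n unfolding M_def by presburger
    then have "real n / 3 * real n powr (- r) \<le> real M * real n powr (- r)"
      by (intro mult_right_mono) (auto simp: field_simps)
    also have "\<dots> = (\<Sum>m=1..M. real n powr (- r))" by simp
    also have "\<dots> \<le> (\<Sum>m=1..M. real m powr (- r))"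
      using r by (intro sum_mono powr_mono2') (auto simp: M_def)
    finally have sum_ge: "real n / 3 * real n powr (- r) \<le> (\<Sum>m=1..M. real m powr (- r))" .
    have "real n \<noteq> 0" using n by simp
    then have "?c1 * real n powr (- r) = exp (- (3 * r + 2)) / (real n * (r + 2)) * (real n / 3 * real n powr (- r))"
      by simp
    also have "\<dots> \<le> exp (- (3 * r + 2)) / (real n * (r + 2)) * (\<Sum>m=1..M. real m powr (- r))"
      using sum_ge r by (intro mult_left_mono) auto
    also have "\<dots> \<le> freshness_limit r n 1"
      using freshness_limit_ge[OF r(1) n] by (simp add: M_def)
    finally show "?c1 * real n powr (- r) \<le> freshness_limit r n 1" .
  qed
qed

lemma freshness_limit_asymp_eq_1:
  "\<exists>c1 c2. c1 > 0 \<and> c2 > 0 \<and>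
    (\<forall>\<^sub>F n in sequentially. c1 * (ln (real n) / real n) \<le> freshness_limit 1 n 1 \<and>
                              freshness_limit 1 n 1 \<le> c2 * (ln (real n) / real n))"
proof (intro exI conjI)
  let ?c1 = "exp (- 5) / 6 :: real"
  show "0 < ?c1" "0 < (12::real)" by simp_all
  show "\<forall>\<^sub>F n in sequentially. ?c1 * (ln (real n) / real n) \<le> freshness_limit 1 n 1 \<and>
                              freshness_limit 1 n 1 \<le> 12 * (ln (real n) / real n)"
    unfolding eventually_sequentially
  proof (intro exI allI impI conjI)
    fix n :: nat assume n: "3 \<le> n"
    have "exp 1 \<le> real n" using exp_le n by linarith
    then have ln_n: "1 \<le> ln (real n)" using n by (simp add: ln_ge_iff)
    have "freshness_limit 1 n 1 \<le> 2 / real n * harm n + 8 / real n"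
      using freshness_limit_le[of 1 "1 / 4" 1 n] n unfolding sum_powr_minus_one
      by (simp add: powr_minus_divide)
    also have "\<dots> \<le> 2 / real n * (2 * ln (real n)) + 8 * (ln (real n) / real n)"
      using harm_le_one_plus_ln[of n] n ln_n by (intro add_mono mult_left_mono) (auto simp: field_simps)
    also have "\<dots> = 12 * (ln (real n) / real n)" by simp
    finally show "freshness_limit 1 n 1 \<le> 12 * (ln (real n) / real n)" .
    define M where "M = n div 2"
    have "n \<le> 2 * M + 1" unfolding M_def by presburger
    also have "\<dots> \<le> (M + 1) ^ 2" by (simp add: power2_eq_square)
    finally have "n \<le> (M + 1) ^ 2" .
    then have "real n \<le> (real M + 1) ^ 2"
      by (metis of_nat_1 of_nat_add of_nat_le_iff of_nat_power)
    then have "ln (real n) \<le> ln ((real M + 1) ^ 2)" using n by simp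
    also have "\<dots> = 2 * ln (real M + 1)" by (simp add: ln_realpow)
    also have "\<dots> \<le> 2 * harm M" using ln_le_harm[of M] by simp
    finally have "?c1 * (ln (real n) / real n) \<le> exp (- (3 * 1 + 2)) / (real n * (1 + 2)) * harm M"
      using n by (simp add: field_simps)
    also have "\<dots> \<le> freshness_limit 1 n 1"
      using freshness_limit_ge[of 1 n] n unfolding sum_powr_minus_one by (simp add: M_def)
    finally show "?c1 * (ln (real n) / real n) \<le> freshness_limit 1 n 1" .
  qed
qed

lemma freshness_limit_asymp_greater_1:
  assumes r: "1 < r"
  shows "\<exists>c1 c2. c1 > 0 \<and> c2 > 0 \<and>
    (\<forall>\<^sub>F n in sequentially. c1 / real n \<le> freshness_limit r n 1 \<and> freshness_limit r n 1 \<le> c2 / real n)"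
proof (intro exI conjI)
  define a c where "a = min ((1 + r) / 2) 2" and "c = 1 / (2 * (1 + r))"
  have a: "1 < a" "a \<le> 2" "2 * a - 1 \<le> r" using r by (auto simp: a_def min_def field_simps)
  have "0 < c" using r by (simp add: c_def)
  define Z where "Z = (\<Sum>m. real m powr (- a))"
  have "summable (\<lambda>m. real m powr (- a))" using a by (simp add: summable_real_powr_iff)
  then have "0 \<le> Z" unfolding Z_def by (intro suminf_nonneg) auto
  let ?c1 = "exp (- (3 * r + 2)) / (r + 2)"
  let ?c2 = "2 * Z + 2 powr a / c"
  show "0 < ?c1" using r by simp
  show "0 < ?c2" using \<open>0 \<le> Z\<close> \<open>0 < c\<close> by (simp add: add_nonneg_pos)
  show "\<forall>\<^sub>F n in sequentially. ?c1 / real n \<le> freshness_limit r n 1 \<and> freshness_limit r n 1 \<le> ?c2 / real n"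
    unfolding eventually_sequentially
  proof (intro exI allI impI conjI)
    fix n :: nat assume n: "2 \<le> n"
    have bound: "(1 + x) powr a \<le> 1 + r * x" if "0 \<le> x" "x \<le> 1" for x
      using one_plus_powr_le_convex[of a x] a that mult_right_mono[OF a(3) that(1)] by simp
    have "freshness_limit r n 1 \<le> 2 / real n * (\<Sum>m=1..n. real m powr (- a)) + 2 powr a / c * real n powr (- a)"
      using r n a \<open>0 < c\<close> by (intro freshness_limit_le bound) (auto simp: c_def)
    also have "\<dots> \<le> 2 / real n * Z + 2 powr a / c * (1 / real n)"
    proof (intro add_mono mult_left_mono)
      show "(\<Sum>m=1..n. real m powr (- a)) \<le> Z"
        unfolding Z_def by (intro sum_le_suminf \<open>summable _\<close>) auto
      show "real n powr (- a) \<le> 1 / real n"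
        using a n powr_mono[of "- a" "- 1" "real n"] by (simp add: powr_minus_divide)
    qed (use \<open>0 < c\<close> in auto)
    also have "\<dots> = ?c2 / real n" by (simp add: add_divide_distrib)
    finally show "freshness_limit r n 1 \<le> ?c2 / real n" .
    have "real 1 powr (- r) \<le> (\<Sum>m=1..n div 2. real m powr (- r))"
      using n by (intro member_le_sum) auto
    then have one_le: "1 \<le> (\<Sum>m=1..n div 2. real m powr (- r))" by simp
    have "?c1 / real n = exp (- (3 * r + 2)) / (real n * (r + 2)) * 1" by (simp add: mult.commute)
    also have "\<dots> \<le> exp (- (3 * r + 2)) / (real n * (r + 2)) * (\<Sum>m=1..n div 2. real m powr (- r))"
      using one_le r by (intro mult_left_mono) auto
    also have "\<dots> \<le> freshness_limit r n 1" using r n by (intro freshness_limit_ge) auto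
    finally show "?c1 / real n \<le> freshness_limit r n 1" .
  qed
qed

theorem theorem4:
  fixes lam_e lam :: real
  assumes "lam_e > 0" and "lam > 0"
  shows "\<exists>F :: nat \<Rightarrow> real.
    (\<forall>n\<ge>2. \<forall>S0 \<subseteq> {..<n}. ((\<lambda>t. expected_freshness lam_e lam n S0 t) \<longlongrightarrow> F n) at_top) \<and>
    (lam_e / lam < 1 \<longrightarrow> (\<exists>c1 c2. c1 > 0 \<and> c2 > 0 \<and>
        (\<forall>\<^sub>F n in sequentially. c1 * real n powr (- (lam_e / lam)) \<le> F n \<and>
                                  F n \<le> c2 * real n powr (- (lam_e / lam))))) \<and>
    (lam_e / lam = 1 \<longrightarrow> (\<exists>c1 c2. c1 > 0 \<and> c2 > 0 \<and>
        (\<forall>\<^sub>F n in sequentially. c1 * (ln (real n) / real n) \<le> F n \<and>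
                                  F n \<le> c2 * (ln (real n) / real n)))) \<and>
    (lam_e / lam > 1 \<longrightarrow> (\<exists>c1 c2. c1 > 0 \<and> c2 > 0 \<and>
        (\<forall>\<^sub>F n in sequentially. c1 / real n \<le> F n \<and> F n \<le> c2 / real n)))"
proof (intro exI[of _ "\<lambda>n. freshness_limit (lam_e / lam) n 1"] conjI allI impI)
  fix n :: nat and S0 assume "2 \<le> n" "S0 \<subseteq> {..<n}"
  then interpret gossip_network lam_e lam n using assms by unfold_locales
  have "(\<lambda>t. expected_freshness lam_e lam n S0 t) = fresh_prob S0 {0}"
    unfolding expected_freshness_def fresh_prob_def by (intro ext sum.cong refl) auto
  then show "((\<lambda>t. expected_freshness lam_e lam n S0 t) \<longlongrightarrow> freshness_limit (lam_e / lam) n 1) at_top"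
    using tendsto_fresh_prob[OF \<open>S0 \<subseteq> {..<n}\<close>, of "{0}"] \<open>2 \<le> n\<close> by simp
next
  assume "lam_e / lam < 1"
  then show "\<exists>c1 c2. c1 > 0 \<and> c2 > 0 \<and>
      (\<forall>\<^sub>F n in sequentially. c1 * real n powr (- (lam_e / lam)) \<le> freshness_limit (lam_e / lam) n 1 \<and>
                                freshness_limit (lam_e / lam) n 1 \<le> c2 * real n powr (- (lam_e / lam)))"
    using assms by (intro freshness_limit_asymp_less_1) simp_all
next
  assume "lam_e / lam = 1"
  then show "\<exists>c1 c2. c1 > 0 \<and> c2 > 0 \<and>
      (\<forall>\<^sub>F n in sequentially. c1 * (ln (real n) / real n) \<le> freshness_limit (lam_e / lam) n 1 \<and>
                                freshness_limit (lam_e / lam) n 1 \<le> c2 * (ln (real n) / real n))"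
    using freshness_limit_asymp_eq_1 by simp
next
  assume "lam_e / lam > 1"
  then show "\<exists>c1 c2. c1 > 0 \<and> c2 > 0 \<and>
      (\<forall>\<^sub>F n in sequentially. c1 / real n \<le> freshness_limit (lam_e / lam) n 1 \<and>
                                freshness_limit (lam_e / lam) n 1 \<le> c2 / real n)"
    by (rule freshness_limit_asymp_greater_1)
qed

end
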